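(* Let $\mu\in\mathbb{R}$, $\sigma>0$, and let $\frac12\le\alpha<\beta<1$, $0\le h_1\le h_2<1$. Put $k_1=\frac{h_2-h_1}{\beta-\alpha}$ and $k_2=\frac{h_1}{1-\beta}$. (i) If $k_1\ge k_2$, or if $k_1<k_2$ and $1-h_1\ge\frac{\beta-\alpha}{1-\alpha}$, then $$\sup_{X\in V_S(\mu,\sigma)}\rho_{\mathcal{K}^{h_1,h_2}_{\beta,\alpha}}[X]=\mu+\sigma\sqrt{\frac{1}{2(1-\alpha)}},$$ and the supremum is attained by the symmetric random variable $X_*$ taking the values $\mu-\sigma/\sqrt{2(1-\alpha)}$ and $\mu+\sigma/\sqrt{2(1-\alpha)}$ with probability $1-\alpha$ each and the value $\mu$ with probability $2\alpha-1$. (ii) If $k_1<k_2$ and $1-h_1<\frac{\beta-\alpha}{1-\alpha}$, then, with $\zeta=h_1^2(1-\alpha)+(1-2h_1)(1-\beta)$, $$\sup_{X\in V_S(\mu,\sigma)}\rho_{\mathcal{K}^{h_1,h_2}_{\beta,\alpha}}[X]=\mu+\sigma\sqrt{\frac{\zeta}{2(1-\beta)(\beta-\alpha)}},$$ and the supremum is attained by the symmetric random variable $X_*$ taking the values $\mu\pm\sigma h_1\sqrt{\frac{\beta-\alpha}{2(1-\beta)\zeta}}$ with probability $1-\beta$ each, the values $\mu\pm\sigma(1-h_1)\sqrt{\frac{1-\beta}{2(\beta-\alpha)\zeta}}$ with probability $\beta-\alpha$ each, and the value $\mu$ with probability $2\alpha-1$.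
   Context: All random variables are square-integrable on a common probability space. For a distortion function $h$ (nondecreasing on $[0,1]$ with $h(0)=0$, $h(1)=1$) the distortion risk measure of $X$ is the Choquet integral $\rho_h[X]=\int_0^\infty h(\bar F_X(x))\,dx+\int_{-\infty}^0\big(h(\bar F_X(x))-1\big)\,dx$, where $\bar F_X(x)=\mathbb{P}(X>x)$. For $0<\alpha<\beta<1$ and $0\le h_1\le h_2<1$, the GlueVaR distortion function is $\mathcal{K}^{h_1,h_2}_{\beta,\alpha}(p)=\frac{h_1p}{1-\beta}$ for $p\in[0,1-\beta)$, $\mathcal{K}^{h_1,h_2}_{\beta,\alpha}(p)=h_1+\frac{(h_2-h_1)(p-(1-\beta))}{\beta-\alpha}$ for $p\in[1-\beta,1-\alpha)$, and $\mathcal{K}^{h_1,h_2}_{\beta,\alpha}(p)=1$ for $p\in[1-\alpha,1]$. A random variable $X$ is symmetric if there is $m\in\mathbb{R}$ with $\mathbb{P}(X\le x)=\mathbb{P}(X\ge 2m-x)$ for all $x$. $V_S(\mu,\sigma)$ denotes the set of symmetric random variables $X$ with $\mathbb{E}X=\mu$ and $\mathrm{Var}(X)=\sigma^2$. *)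

theory Defs
  imports "HOL-Probability.Probability"
begin

definition survival :: "'a measure \<Rightarrow> ('a \<Rightarrow> real) \<Rightarrow> real \<Rightarrow> real" where
  "survival M X x = measure M {\<omega> \<in> space M. X \<omega> > x}"

definition distortion_rm :: "(real \<Rightarrow> real) \<Rightarrow> 'a measure \<Rightarrow> ('a \<Rightarrow> real) \<Rightarrow> real" where
  "distortion_rm h M X =
     (LBINT x:{0..}. h (survival M X x)) + (LBINT x:{..<0}. h (survival M X x) - 1)"

definition glue_K :: "real \<Rightarrow> real \<Rightarrow> real \<Rightarrow> real \<Rightarrow> real \<Rightarrow> real" where
  "glue_K h1 h2 \<beta> \<alpha> p =
     (if p < 1 - \<beta> then h1 * p / (1 - \<beta>)
      else if p < 1 - \<alpha> then h1 + (h2 - h1) * (p - (1 - \<beta>)) / (\<beta> - \<alpha>)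
      else 1)"

definition symmetric_rv :: "'a measure \<Rightarrow> ('a \<Rightarrow> real) \<Rightarrow> bool" where
  "symmetric_rv M X \<longleftrightarrow> (\<exists>m. \<forall>x. measure M {\<omega> \<in> space M. X \<omega> \<le> x}
                                  = measure M {\<omega> \<in> space M. X \<omega> \<ge> 2 * m - x})"

definition VS :: "'a measure \<Rightarrow> real \<Rightarrow> real \<Rightarrow> ('a \<Rightarrow> real) set" where
  "VS M \<mu> \<sigma> = {X. X \<in> borel_measurable M \<and> integrable M (\<lambda>\<omega>. (X \<omega>)\<^sup>2)
      \<and> symmetric_rv M X
      \<and> (\<integral>\<omega>. X \<omega> \<partial>M) = \<mu>
      \<and> (\<integral>\<omega>. (X \<omega> - \<mu>)\<^sup>2 \<partial>M) = \<sigma>\<^sup>2}"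

end

theory Submission
  imports Defs
begin

text \<open>
  For \<open>X \<in> V\<^sub>S(\<mu>, \<sigma>)\<close>, symmetry about the mean gives \<open>P(X > x) \<ge> 1/2 \<ge> 1 - \<alpha>\<close> for
  \<open>x < \<mu>\<close>, where the GlueVaR distortion \<open>K\<close> equals \<open>1\<close>; hence
  \<open>\<rho>[X] = \<mu> + \<integral>\<^bsub>\<mu>\<^esub>\<^sup>\<infinity> K(P(X > x)) dx\<close>.
  In both cases \<open>K\<close> lies below \<open>min(1, a + s t, k t)\<close> on \<open>[0, 1]\<close> with \<open>a \<ge> 0\<close>, \<open>0 \<le> s \<le> k\<close>:
  in case (i) \<open>a = 0\<close> and \<open>s = k = 1/(1 - \<alpha>)\<close>; in case (ii) \<open>a + s t\<close> is the chord through
  \<open>(1 - \<beta>, h\<^sub>1)\<close> and \<open>(1 - \<alpha>, 1)\<close> and \<open>k = h\<^sub>1/(1 - \<beta>)\<close>.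
  Cutting \<open>[\<mu>, \<infinity>)\<close> at \<open>\<mu> + c\<^sub>1 \<le> \<mu> + c\<^sub>2\<close> and using
  \<open>\<integral>\<^bsub>c\<^esub>\<^sup>\<infinity> P(X > x) dx = E (X - c)\<^sup>+\<close> bounds the integral by
  \<open>c\<^sub>1 + a (c\<^sub>2 - c\<^sub>1) + E [s (X - \<mu> - c\<^sub>1)\<^sup>+ + (k - s) (X - \<mu> - c\<^sub>2)\<^sup>+]\<close>.
  For \<open>c\<^sub>1 = s/(4\<lambda>)\<close>, \<open>c\<^sub>2 = (k + s)/(4\<lambda>)\<close> the hinge function is below \<open>\<lambda> ((X - \<mu>)\<^sup>+)\<^sup>2\<close>,
  whose mean is \<open>\<lambda> \<sigma>\<^sup>2/2\<close> by symmetry, and optimising over \<open>\<lambda>\<close> gives \<open>\<mu> + \<sigma> \<surd>((s + a k)/2)\<close>.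
  Equality holds for symmetric laws on \<open>\<mu>, \<mu> \<plusminus> b, \<mu> \<plusminus> u\<close> whose survival function
  sits exactly at the kinks \<open>1 - \<alpha>\<close> and \<open>1 - \<beta>\<close> of \<open>K\<close>.
\<close>

section \<open>Quadratic bounds on hinge functions\<close>

lemma linear_le_quadratic:
  fixes lam u z :: real
  assumes "0 < lam"
  shows "u * z - u\<^sup>2 / (4 * lam) \<le> lam * z\<^sup>2"
proof -
  have "0 \<le> (2 * lam * z - u)\<^sup>2 / (4 * lam)" using assms by simp
  also have "\<dots> = lam * z\<^sup>2 - (u * z - u\<^sup>2 / (4 * lam))"
    using assms by (simp add: field_simps power2_eq_square)
  finally show ?thesis by simp
qed

lemma hinge_le_quadratic:
  fixes lam s k z :: real
  assumes lam: "0 < lam" and "0 \<le> s" "s \<le> k" "0 \<le> z"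
  shows "s * max 0 (z - s / (4 * lam)) + (k - s) * max 0 (z - (k + s) / (4 * lam)) \<le> lam * z\<^sup>2"
proof -
  have knots: "s / (4 * lam) \<le> (k + s) / (4 * lam)"
    using assms by (intro divide_right_mono) auto
  consider "z \<le> s / (4 * lam)" | "s / (4 * lam) < z" "z \<le> (k + s) / (4 * lam)" | "(k + s) / (4 * lam) < z"
    by linarith
  then show ?thesis
  proof cases
    case 1
    then have "max 0 (z - s / (4 * lam)) = 0" "max 0 (z - (k + s) / (4 * lam)) = 0"
      using knots by auto
    then show ?thesis using lam by simp
  next
    case 2
    then have "s * max 0 (z - s / (4 * lam)) + (k - s) * max 0 (z - (k + s) / (4 * lam))
        = s * z - s\<^sup>2 / (4 * lam)"
      by (simp add: max_def power2_eq_square algebra_simps)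
    then show ?thesis using linear_le_quadratic[OF lam, of s z] by simp
  next
    case 3
    then have "s * max 0 (z - s / (4 * lam)) + (k - s) * max 0 (z - (k + s) / (4 * lam))
        = k * z - k\<^sup>2 / (4 * lam)"
      using knots lam by (simp add: max_def field_simps power2_eq_square)
    then show ?thesis using linear_le_quadratic[OF lam, of k z] by simp
  qed
qed

lemma indicator_majorant:
  fixes x \<mu> c1 c2 a s k y z :: real
  assumes "0 \<le> a" "0 \<le> s" "s \<le> k" "0 \<le> y"
    and "z \<le> 1" "z \<le> a + s * y" "z \<le> k * y"
  shows "indicator {\<mu>..} x * z
    \<le> indicator {\<mu>..<\<mu>+c1} x + a * indicator {\<mu>+c1..<\<mu>+c2} x
      + s * (indicator {\<mu>+c1..} x * y) + (k - s) * (indicator {\<mu>+c2..} x * y)"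
proof -
  have "0 \<le> s * y" "0 \<le> (k - s) * y" using assms by simp_all
  then show ?thesis
    using assms by (auto simp: indicator_def algebra_simps)
qed

section \<open>Distortion risk measures of symmetric random variables\<close>

lemma distortion_rm_eq_shift:
  assumes one: "\<And>x. x < c \<Longrightarrow> h (survival M X x) = 1"
    and int: "integrable lborel (\<lambda>x. indicator {c..} x * h (survival M X x))"
  shows "distortion_rm h M X = c + (\<integral>x. indicator {c..} x * h (survival M X x) \<partial>lborel)"
proof -
  define G where "G x = h (survival M X x)" for x
  define g where "g x = indicator {c..} x * G x" for x
  define d where "d x = (indicator {0..<c} x - indicator {c..<0} x :: real)" for x
  have g_int: "integrable lborel g" using int unfolding g_def[abs_def] G_def[abs_def] .
  have d_int: "integrable lborel d" unfolding d_def
    by (intro Bochner_Integration.integrable_diff integrable_real_indicator emeasure_bounded_finite) auto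
  have d_integral: "(\<integral>x. d x \<partial>lborel) = c"
  proof (cases "0 \<le> c")
    case True
    then have "{c..<0::real} = {}" by auto
    then show ?thesis unfolding d_def using True
      by (subst Bochner_Integration.integral_diff) (auto intro!: integrable_real_indicator)
  next
    case False
    then have "{0..<c::real} = {}" by auto
    then show ?thesis unfolding d_def using False
      by (subst Bochner_Integration.integral_diff) (auto intro!: integrable_real_indicator)
  qed
  text \<open>\<open>g + d\<close> agrees with the integrand of \<open>distortion_rm\<close> on both half-lines,
    since \<open>G\<close> is \<open>1\<close> left of \<open>c\<close>.\<close>
  have pos: "indicator {0..} x *\<^sub>R G x = indicator {0..} x *\<^sub>R (g x + d x)" for x
    by (cases "x < c"; cases "x < 0") (auto simp: g_def d_def G_def one indicator_def)
  have neg: "indicator {..<0} x *\<^sub>R (G x - 1) = indicator {..<0} x *\<^sub>R (g x + d x)" for x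
    by (cases "x < c"; cases "x < 0") (auto simp: g_def d_def G_def one indicator_def)
  have halves: "indicator {0..} x *\<^sub>R (g x + d x) + indicator {..<0} x *\<^sub>R (g x + d x) = g x + d x"
    for x :: real
    by (auto simp: indicator_def)
  have gd_int: "integrable lborel (\<lambda>x. g x + d x)" using g_int d_int by simp
  have "distortion_rm h M X
      = (\<integral>x. indicator {0..} x *\<^sub>R (g x + d x) \<partial>lborel) + (\<integral>x. indicator {..<0} x *\<^sub>R (g x + d x) \<partial>lborel)"
    unfolding distortion_rm_def set_lebesgue_integral_def G_def[symmetric] pos neg ..
  also have "\<dots> = (\<integral>x. indicator {0..} x *\<^sub>R (g x + d x) + indicator {..<0} x *\<^sub>R (g x + d x) \<partial>lborel)"
    by (intro Bochner_Integration.integral_add[symmetric] integrable_mult_indicator gd_int) auto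
  also have "\<dots> = (\<integral>x. g x + d x \<partial>lborel)" unfolding halves ..
  also have "\<dots> = (\<integral>x. g x \<partial>lborel) + c" using g_int d_int d_integral by simp
  finally show ?thesis by (simp add: g_def G_def)
qed

context prob_space
begin

lemma survival_antimono:
  assumes "X \<in> borel_measurable M" and "x \<le> y"
  shows "survival M X y \<le> survival M X x"
  unfolding survival_def using assms
  by (intro finite_measure_mono) (auto, measurable)

lemma borel_measurable_survival_comp:
  fixes h :: "real \<Rightarrow> real"
  assumes "X \<in> borel_measurable M" and "mono h"
  shows "(\<lambda>x. h (survival M X x)) \<in> borel_measurable borel"
proof -
  have "mono (\<lambda>x. - h (survival M X x))"
  proof (rule monoI)
    fix x y :: real
    assume "x \<le> y"
    then show "- h (survival M X x) \<le> - h (survival M X y)"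
      using monoD[OF assms(2) survival_antimono[OF assms(1)]] by simp
  qed
  then have "(\<lambda>x. - (- h (survival M X x))) \<in> borel_measurable borel"
    by (intro borel_measurable_uminus borel_measurable_mono)
  then show ?thesis by simp
qed

lemma nn_integral_survival_atLeast:
  assumes X: "X \<in> borel_measurable M"
  shows "(\<integral>\<^sup>+x. ennreal (indicator {c..} x * survival M X x) \<partial>lborel)
       = (\<integral>\<^sup>+\<omega>. ennreal (max 0 (X \<omega> - c)) \<partial>M)"
proof -
  interpret pair_sigma_finite lborel M ..
  define f where "f x \<omega> = (indicator {c..<X \<omega>} x :: ennreal)" for x \<omega>
  have f_measurable: "case_prod f \<in> borel_measurable (lborel \<Otimes>\<^sub>M M)"
  proof -
    have "case_prod f = indicator {p. c \<le> fst p \<and> fst p < X (snd p)}"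
      by (auto simp: f_def fun_eq_iff split: split_indicator)
    also have "\<dots> \<in> borel_measurable (lborel \<Otimes>\<^sub>M M)"
      using X by measurable
    finally show ?thesis .
  qed
  have inner_M: "(\<integral>\<^sup>+\<omega>. f x \<omega> \<partial>M) = ennreal (indicator {c..} x * survival M X x)" for x
  proof -
    have "(\<integral>\<^sup>+\<omega>. f x \<omega> \<partial>M) = (\<integral>\<^sup>+\<omega>. indicator {\<omega> \<in> space M. c \<le> x \<and> x < X \<omega>} \<omega> \<partial>M)"
      by (intro nn_integral_cong) (auto simp: f_def split: split_indicator)
    also have "\<dots> = emeasure M {\<omega> \<in> space M. c \<le> x \<and> x < X \<omega>}"
      using X by (intro nn_integral_indicator) measurable
    also have "\<dots> = ennreal (indicator {c..} x * survival M X x)"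
      by (cases "c \<le> x") (auto simp: emeasure_eq_measure survival_def)
    finally show ?thesis .
  qed
  have inner_lborel: "(\<integral>\<^sup>+x. f x \<omega> \<partial>lborel) = ennreal (max 0 (X \<omega> - c))" for \<omega>
    by (cases "c \<le> X \<omega>") (auto simp: f_def max_def)
  have "(\<integral>\<^sup>+x. ennreal (indicator {c..} x * survival M X x) \<partial>lborel)
      = (\<integral>\<^sup>+x. (\<integral>\<^sup>+\<omega>. f x \<omega> \<partial>M) \<partial>lborel)" by (simp add: inner_M)
  also have "\<dots> = (\<integral>\<^sup>+\<omega>. (\<integral>\<^sup>+x. f x \<omega> \<partial>lborel) \<partial>M)"
    using Fubini'[OF f_measurable] by simp
  also have "\<dots> = (\<integral>\<^sup>+\<omega>. ennreal (max 0 (X \<omega> - c)) \<partial>M)" by (simp add: inner_lborel)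
  finally show ?thesis .
qed

lemma nn_integral_survival_atLeast_cmult:
  assumes X: "X \<in> borel_measurable M" and "0 \<le> r"
  shows "(\<integral>\<^sup>+x. ennreal (r * (indicator {c..} x * survival M X x)) \<partial>lborel)
       = (\<integral>\<^sup>+\<omega>. ennreal (r * max 0 (X \<omega> - c)) \<partial>M)"
proof -
  have [measurable]: "(\<lambda>x. survival M X x) \<in> borel_measurable borel"
    using borel_measurable_survival_comp[OF X, of id] by (simp add: mono_def)
  have "(\<integral>\<^sup>+x. ennreal (r * (indicator {c..} x * survival M X x)) \<partial>lborel)
      = ennreal r * (\<integral>\<^sup>+x. ennreal (indicator {c..} x * survival M X x) \<partial>lborel)"
    using \<open>0 \<le> r\<close> by (simp add: ennreal_mult' nn_integral_cmult)
  also have "\<dots> = ennreal r * (\<integral>\<^sup>+\<omega>. ennreal (max 0 (X \<omega> - c)) \<partial>M)"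
    unfolding nn_integral_survival_atLeast[OF X] ..
  also have "\<dots> = (\<integral>\<^sup>+\<omega>. ennreal (r * max 0 (X \<omega> - c)) \<partial>M)"
    using \<open>0 \<le> r\<close> X by (simp add: ennreal_mult' nn_integral_cmult)
  finally show ?thesis .
qed

lemma VS_integrable: "X \<in> VS M \<mu> \<sigma> \<Longrightarrow> integrable M X"
  by (auto simp: VS_def intro: square_integrable_imp_integrable)

lemma VS_distr_reflect:
  assumes XV: "X \<in> VS M \<mu> \<sigma>"
  shows "distr M borel X = distr M borel (\<lambda>\<omega>. 2 * \<mu> - X \<omega>)"
proof -
  have X[measurable]: "X \<in> borel_measurable M" and mean: "(\<integral>\<omega>. X \<omega> \<partial>M) = \<mu>"
    using XV by (auto simp: VS_def)
  obtain m where sym: "\<And>x. prob {\<omega> \<in> space M. X \<omega> \<le> x} = prob {\<omega> \<in> space M. 2 * m - x \<le> X \<omega>}"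
    using XV unfolding VS_def symmetric_rv_def by blast
  have reflect_eq: "distr M borel X = distr M borel (\<lambda>\<omega>. 2 * m - X \<omega>)"
  proof (rule cdf_unique)
    show "cdf (distr M borel X) = cdf (distr M borel (\<lambda>\<omega>. 2 * m - X \<omega>))"
    proof
      fix x
      have "cdf (distr M borel X) x = prob {\<omega> \<in> space M. X \<omega> \<le> x}"
        by (auto simp: cdf_def measure_distr intro!: arg_cong[where f=prob])
      also have "\<dots> = prob {\<omega> \<in> space M. 2 * m - x \<le> X \<omega>}" by (rule sym)
      also have "\<dots> = cdf (distr M borel (\<lambda>\<omega>. 2 * m - X \<omega>)) x"
        by (auto simp: cdf_def measure_distr intro!: arg_cong[where f=prob])
      finally show "cdf (distr M borel X) x = cdf (distr M borel (\<lambda>\<omega>. 2 * m - X \<omega>)) x" .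
    qed
  qed (simp_all add: real_distribution_distr)
  text \<open>The centre of symmetry is the mean.\<close>
  have "\<mu> = (\<integral>x. x \<partial>distr M borel X)" using mean by (simp add: integral_distr)
  also have "\<dots> = (\<integral>\<omega>. 2 * m - X \<omega> \<partial>M)" by (simp add: reflect_eq integral_distr)
  also have "\<dots> = 2 * m - \<mu>" using VS_integrable[OF XV] mean by (simp add: prob_space)
  finally show ?thesis using reflect_eq by simp
qed

lemma VS_survival_ge_half:
  assumes XV: "X \<in> VS M \<mu> \<sigma>" and "x < \<mu>"
  shows "1/2 \<le> survival M X x"
proof -
  have X[measurable]: "X \<in> borel_measurable M" using XV by (simp add: VS_def)
  have below_eq_above: "prob {\<omega> \<in> space M. X \<omega> \<le> \<mu>} = prob {\<omega> \<in> space M. \<mu> \<le> X \<omega>}"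
    using arg_cong[OF VS_distr_reflect[OF XV], of "\<lambda>N. measure N {..\<mu>}"]
    by (simp add: measure_distr vimage_def Int_def conj_commute)
  have "1 = prob ({\<omega> \<in> space M. X \<omega> \<le> \<mu>} \<union> {\<omega> \<in> space M. \<mu> \<le> X \<omega>})"
    by (subst prob_space[symmetric]) (auto intro!: arg_cong[where f=prob])
  also have "\<dots> \<le> prob {\<omega> \<in> space M. X \<omega> \<le> \<mu>} + prob {\<omega> \<in> space M. \<mu> \<le> X \<omega>}"
    by (intro measure_Un_le) measurable
  also have "\<dots> = 2 * prob {\<omega> \<in> space M. \<mu> \<le> X \<omega>}" using below_eq_above by simp
  also have "prob {\<omega> \<in> space M. \<mu> \<le> X \<omega>} \<le> survival M X x"
    unfolding survival_def using \<open>x < \<mu>\<close> by (intro finite_measure_mono) (auto, measurable)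
  finally show ?thesis by simp
qed

lemma VS_upper_semivariance:
  assumes XV: "X \<in> VS M \<mu> \<sigma>"
  shows "integrable M (\<lambda>\<omega>. (max 0 (X \<omega> - \<mu>))\<^sup>2)"
    and "(\<integral>\<omega>. (max 0 (X \<omega> - \<mu>))\<^sup>2 \<partial>M) = \<sigma>\<^sup>2 / 2"
proof -
  have X[measurable]: "X \<in> borel_measurable M" and X2: "integrable M (\<lambda>\<omega>. (X \<omega>)\<^sup>2)"
    and var: "(\<integral>\<omega>. (X \<omega> - \<mu>)\<^sup>2 \<partial>M) = \<sigma>\<^sup>2"
    using XV by (auto simp: VS_def)
  have centred: "integrable M (\<lambda>\<omega>. (X \<omega> - \<mu>)\<^sup>2)"
    using X2 VS_integrable[OF XV] by (simp add: power2_diff)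
  have part_int: "integrable M (\<lambda>\<omega>. (max 0 (e * (X \<omega> - \<mu>)))\<^sup>2)" if "e = 1 \<or> e = -1" for e :: real
    by (rule Bochner_Integration.integrable_bound[OF centred])
      (use that in \<open>auto simp: max_def power2_eq_square algebra_simps\<close>)
  show pos_int: "integrable M (\<lambda>\<omega>. (max 0 (X \<omega> - \<mu>))\<^sup>2)" using part_int[of 1] by simp
  have neg_int: "integrable M (\<lambda>\<omega>. (max 0 (\<mu> - X \<omega>))\<^sup>2)" using part_int[of "-1"] by simp
  have "(\<integral>\<omega>. (max 0 (X \<omega> - \<mu>))\<^sup>2 \<partial>M) = (\<integral>x. (max 0 (x - \<mu>))\<^sup>2 \<partial>distr M borel X)"
    by (simp add: integral_distr)
  also have "\<dots> = (\<integral>\<omega>. (max 0 (\<mu> - X \<omega>))\<^sup>2 \<partial>M)"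
    by (simp add: VS_distr_reflect[OF XV] integral_distr)
  finally have halves: "(\<integral>\<omega>. (max 0 (X \<omega> - \<mu>))\<^sup>2 \<partial>M) = (\<integral>\<omega>. (max 0 (\<mu> - X \<omega>))\<^sup>2 \<partial>M)" .
  have "(X \<omega> - \<mu>)\<^sup>2 = (max 0 (X \<omega> - \<mu>))\<^sup>2 + (max 0 (\<mu> - X \<omega>))\<^sup>2" for \<omega>
    by (cases "X \<omega> \<le> \<mu>") (simp_all add: max_def power2_eq_square algebra_simps)
  then have "\<sigma>\<^sup>2 = (\<integral>\<omega>. (max 0 (X \<omega> - \<mu>))\<^sup>2 \<partial>M) + (\<integral>\<omega>. (max 0 (\<mu> - X \<omega>))\<^sup>2 \<partial>M)"
    using var pos_int neg_int by simp
  then show "(\<integral>\<omega>. (max 0 (X \<omega> - \<mu>))\<^sup>2 \<partial>M) = \<sigma>\<^sup>2 / 2" using halves by simp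
qed

lemma nn_integral_distortion_tail_le:
  assumes X: "X \<in> borel_measurable M"
    and "0 \<le> a" "0 \<le> s" "s \<le> k" "0 \<le> c1" "c1 \<le> c2"
    and le_1: "\<And>t. 0 \<le> t \<Longrightarrow> t \<le> 1 \<Longrightarrow> h t \<le> 1"
    and le_chord: "\<And>t. 0 \<le> t \<Longrightarrow> t \<le> 1 \<Longrightarrow> h t \<le> a + s * t"
    and le_slope: "\<And>t. 0 \<le> t \<Longrightarrow> t \<le> 1 \<Longrightarrow> h t \<le> k * t"
  shows "(\<integral>\<^sup>+x. ennreal (indicator {\<mu>..} x * h (survival M X x)) \<partial>lborel)
    \<le> ennreal (c1 + a * (c2 - c1))
      + (\<integral>\<^sup>+\<omega>. ennreal (s * max 0 (X \<omega> - (\<mu> + c1)) + (k - s) * max 0 (X \<omega> - (\<mu> + c2))) \<partial>M)"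
proof -
  define S where "S x = survival M X x" for x
  have [measurable]: "S \<in> borel_measurable borel"
    using borel_measurable_survival_comp[OF X, of id] by (simp add: S_def[abs_def] mono_def)
  have S01: "0 \<le> S x" "S x \<le> 1" for x by (simp_all add: S_def survival_def)
  define t1 where "t1 x = (indicator {\<mu>..<\<mu>+c1} x :: real)" for x
  define t2 where "t2 x = a * (indicator {\<mu>+c1..<\<mu>+c2} x :: real)" for x
  define t3 where "t3 c x = indicator {c..} x * S x" for c x
  have [measurable]: "t1 \<in> borel_measurable borel" "t2 \<in> borel_measurable borel"
    "t3 c \<in> borel_measurable borel" for c
    unfolding t1_def[abs_def] t2_def[abs_def] t3_def[abs_def] by measurable
  have t_nonneg: "0 \<le> t1 x" "0 \<le> t2 x" "0 \<le> t3 c x" for c x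
    using \<open>0 \<le> a\<close> S01 by (simp_all add: t1_def t2_def t3_def)
  have "(\<integral>\<^sup>+x. ennreal (indicator {\<mu>..} x * h (S x)) \<partial>lborel)
      \<le> (\<integral>\<^sup>+x. ennreal (t1 x) + ennreal (t2 x) + (ennreal (s * t3 (\<mu>+c1) x) + ennreal ((k - s) * t3 (\<mu>+c2) x)) \<partial>lborel)"
  proof (intro nn_integral_mono)
    fix x
    have "indicator {\<mu>..} x * h (S x) \<le> t1 x + t2 x + s * t3 (\<mu>+c1) x + (k - s) * t3 (\<mu>+c2) x"
      unfolding t1_def t2_def t3_def
      using assms(2-4) S01 le_1 le_chord le_slope by (intro indicator_majorant) auto
    then show "ennreal (indicator {\<mu>..} x * h (S x))
        \<le> ennreal (t1 x) + ennreal (t2 x) + (ennreal (s * t3 (\<mu>+c1) x) + ennreal ((k - s) * t3 (\<mu>+c2) x))"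
      using assms(3,4) t_nonneg by (simp add: ennreal_plus[symmetric] ennreal_leI add.assoc del: ennreal_plus)
  qed
  also have "\<dots> = (\<integral>\<^sup>+x. ennreal (t1 x) \<partial>lborel) + (\<integral>\<^sup>+x. ennreal (t2 x) \<partial>lborel)
      + ((\<integral>\<^sup>+x. ennreal (s * t3 (\<mu>+c1) x) \<partial>lborel) + (\<integral>\<^sup>+x. ennreal ((k - s) * t3 (\<mu>+c2) x) \<partial>lborel))"
    by (simp add: nn_integral_add)
  also have "(\<integral>\<^sup>+x. ennreal (t1 x) \<partial>lborel) + (\<integral>\<^sup>+x. ennreal (t2 x) \<partial>lborel) = ennreal (c1 + a * (c2 - c1))"
    using assms(2,5,6)
    by (simp add: t1_def t2_def ennreal_mult' ennreal_indicator nn_integral_cmult_indicator)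
  also have "(\<integral>\<^sup>+x. ennreal (s * t3 (\<mu>+c1) x) \<partial>lborel) + (\<integral>\<^sup>+x. ennreal ((k - s) * t3 (\<mu>+c2) x) \<partial>lborel)
      = (\<integral>\<^sup>+\<omega>. ennreal (s * max 0 (X \<omega> - (\<mu> + c1)) + (k - s) * max 0 (X \<omega> - (\<mu> + c2))) \<partial>M)"
  proof -
    have "ennreal (s * max 0 (X \<omega> - (\<mu> + c1)) + (k - s) * max 0 (X \<omega> - (\<mu> + c2)))
        = ennreal (s * max 0 (X \<omega> - (\<mu> + c1))) + ennreal ((k - s) * max 0 (X \<omega> - (\<mu> + c2)))" for \<omega>
      using assms(3,4) by (intro ennreal_plus) auto
    then show ?thesis
      using assms(3,4) X by (simp add: t3_def S_def nn_integral_survival_atLeast_cmult nn_integral_add)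
  qed
  finally show ?thesis by (simp add: S_def)
qed

lemma nn_integral_hinge_le:
  assumes X: "X \<in> borel_measurable M" and sq_int: "integrable M (\<lambda>\<omega>. (max 0 (X \<omega> - \<mu>))\<^sup>2)"
    and "0 < lam" "0 \<le> s" "s \<le> k"
  shows "(\<integral>\<^sup>+\<omega>. ennreal (s * max 0 (X \<omega> - (\<mu> + s / (4 * lam)))
      + (k - s) * max 0 (X \<omega> - (\<mu> + (k + s) / (4 * lam)))) \<partial>M)
    \<le> ennreal (lam * (\<integral>\<omega>. (max 0 (X \<omega> - \<mu>))\<^sup>2 \<partial>M))"
proof -
  have knots: "0 \<le> s / (4 * lam)" "s / (4 * lam) \<le> (k + s) / (4 * lam)"
    using assms(3-5) by (auto intro!: divide_right_mono)
  have "(\<integral>\<^sup>+\<omega>. ennreal (s * max 0 (X \<omega> - (\<mu> + s / (4 * lam)))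
      + (k - s) * max 0 (X \<omega> - (\<mu> + (k + s) / (4 * lam)))) \<partial>M)
      \<le> (\<integral>\<^sup>+\<omega>. ennreal (lam * (max 0 (X \<omega> - \<mu>))\<^sup>2) \<partial>M)"
  proof (intro nn_integral_mono ennreal_leI)
    fix \<omega>
    have "max 0 (X \<omega> - (\<mu> + c)) = max 0 (max 0 (X \<omega> - \<mu>) - c)" if "0 \<le> c" for c
      using that by (simp add: max_def)
    then show "s * max 0 (X \<omega> - (\<mu> + s / (4 * lam))) + (k - s) * max 0 (X \<omega> - (\<mu> + (k + s) / (4 * lam)))
        \<le> lam * (max 0 (X \<omega> - \<mu>))\<^sup>2"
      using hinge_le_quadratic[OF assms(3-5), of "max 0 (X \<omega> - \<mu>)"] knots by simp
  qed
  also have "\<dots> = ennreal (lam * (\<integral>\<omega>. (max 0 (X \<omega> - \<mu>))\<^sup>2 \<partial>M))"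
    using sq_int \<open>0 < lam\<close> by (subst nn_integral_eq_integral) auto
  finally show ?thesis .
qed

lemma integral_distortion_tail_le:
  assumes X: "X \<in> borel_measurable M" and sq_int: "integrable M (\<lambda>\<omega>. (max 0 (X \<omega> - \<mu>))\<^sup>2)"
    and "mono h" "0 \<le> a" "0 \<le> s" "s \<le> k" "0 < lam"
    and nonneg: "\<And>t. 0 \<le> t \<Longrightarrow> 0 \<le> h t"
    and le_1: "\<And>t. 0 \<le> t \<Longrightarrow> t \<le> 1 \<Longrightarrow> h t \<le> 1"
    and le_chord: "\<And>t. 0 \<le> t \<Longrightarrow> t \<le> 1 \<Longrightarrow> h t \<le> a + s * t"
    and le_slope: "\<And>t. 0 \<le> t \<Longrightarrow> t \<le> 1 \<Longrightarrow> h t \<le> k * t"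
  shows "integrable lborel (\<lambda>x. indicator {\<mu>..} x * h (survival M X x))"
    and "(\<integral>x. indicator {\<mu>..} x * h (survival M X x) \<partial>lborel)
      \<le> (s + a * k) / (4 * lam) + lam * (\<integral>\<omega>. (max 0 (X \<omega> - \<mu>))\<^sup>2 \<partial>M)"
proof -
  define g where "g x = indicator {\<mu>..} x * h (survival M X x)" for x
  define v where "v = (\<integral>\<omega>. (max 0 (X \<omega> - \<mu>))\<^sup>2 \<partial>M)"
  define c1 where "c1 = s / (4 * lam)"
  define c2 where "c2 = (k + s) / (4 * lam)"
  have c1_nonneg: "0 \<le> c1" and c1_le_c2: "c1 \<le> c2"
    using assms(4-7) by (auto simp: c1_def c2_def intro!: divide_right_mono)
  have [measurable]: "(\<lambda>x. h (survival M X x)) \<in> borel_measurable borel"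
    using borel_measurable_survival_comp[OF X \<open>mono h\<close>] .
  have g_measurable: "g \<in> borel_measurable borel" unfolding g_def[abs_def] by measurable
  have g_nonneg: "0 \<le> g x" for x
    by (simp add: g_def nonneg survival_def)
  have hinge: "(\<integral>\<^sup>+\<omega>. ennreal (s * max 0 (X \<omega> - (\<mu> + c1)) + (k - s) * max 0 (X \<omega> - (\<mu> + c2))) \<partial>M)
      \<le> ennreal (lam * v)"
    unfolding c1_def c2_def v_def using nn_integral_hinge_le[OF X sq_int \<open>0 < lam\<close> \<open>0 \<le> s\<close> \<open>s \<le> k\<close>] .
  have v_nonneg: "0 \<le> v" unfolding v_def by simp
  have knots: "c1 + a * (c2 - c1) = (s + a * k) / (4 * lam)"
    using \<open>0 < lam\<close> by (simp add: c1_def c2_def field_simps)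
  have "(\<integral>\<^sup>+x. ennreal (g x) \<partial>lborel) \<le> ennreal (c1 + a * (c2 - c1)) + ennreal (lam * v)"
    unfolding g_def
    using nn_integral_distortion_tail_le[OF X assms(4-6) c1_nonneg c1_le_c2 le_1 le_chord le_slope]
      hinge by (rule order_trans[OF _ add_left_mono])
  also have "\<dots> = ennreal ((s + a * k) / (4 * lam) + lam * v)"
    using assms(4-7) v_nonneg c1_nonneg c1_le_c2 knots by (simp add: ennreal_plus)
  finally have bound: "(\<integral>\<^sup>+x. ennreal (g x) \<partial>lborel) \<le> ennreal ((s + a * k) / (4 * lam) + lam * v)" .
  show g_int: "integrable lborel (\<lambda>x. indicator {\<mu>..} x * h (survival M X x))"
    using bound g_nonneg g_measurable unfolding g_def[symmetric]
    by (intro integrableI_nonneg) (auto simp: top_unique less_top[symmetric] dest: order.strict_trans1)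
  have "ennreal (\<integral>x. g x \<partial>lborel) \<le> ennreal ((s + a * k) / (4 * lam) + lam * v)"
    using bound g_int g_nonneg unfolding g_def[symmetric] by (subst nn_integral_eq_integral[symmetric]) auto
  then show "(\<integral>x. indicator {\<mu>..} x * h (survival M X x) \<partial>lborel)
      \<le> (s + a * k) / (4 * lam) + lam * (\<integral>\<omega>. (max 0 (X \<omega> - \<mu>))\<^sup>2 \<partial>M)"
    using assms(4-7) v_nonneg unfolding g_def v_def
    by (subst (asm) ennreal_le_iff) (auto intro!: add_nonneg_nonneg)
qed

lemma distortion_rm_le_of_majorants:
  assumes h: "mono h" "h 0 = 0" "\<And>p. 1/2 \<le> p \<Longrightarrow> h p = 1"
    and maj: "0 \<le> a" "0 \<le> s" "s \<le> k" "0 < s + a * k"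
      "\<And>t. 0 \<le> t \<Longrightarrow> t \<le> 1 \<Longrightarrow> h t \<le> a + s * t"
      "\<And>t. 0 \<le> t \<Longrightarrow> t \<le> 1 \<Longrightarrow> h t \<le> k * t"
    and XV: "X \<in> VS M \<mu> \<sigma>" and "0 < \<sigma>"
  shows "distortion_rm h M X \<le> \<mu> + \<sigma> * sqrt ((s + a * k) / 2)"
proof -
  have X: "X \<in> borel_measurable M" using XV by (simp add: VS_def)
  define r where "r = sqrt ((s + a * k) / 2)"
  have r_pos: "0 < r" and sum_eq: "s + a * k = 2 * r\<^sup>2"
    using maj(4) by (simp_all add: r_def)
  text \<open>The optimal choice of the multiplier in \<open>integral_distortion_tail_le\<close>.\<close>
  define lam where "lam = r / \<sigma>"
  have lam_pos: "0 < lam" using r_pos \<open>0 < \<sigma>\<close> by (simp add: lam_def)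
  have nonneg: "0 \<le> h t" if "0 \<le> t" for t using monoD[OF h(1) that] h(2) by simp
  have le_1: "h t \<le> 1" if "t \<le> 1" for t using monoD[OF h(1) that] h(3)[of 1] by simp
  note tail = integral_distortion_tail_le[OF X VS_upper_semivariance(1)[OF XV] h(1) maj(1-3) lam_pos
      nonneg le_1 maj(5,6)]
  have "distortion_rm h M X = \<mu> + (\<integral>x. indicator {\<mu>..} x * h (survival M X x) \<partial>lborel)"
    using VS_survival_ge_half[OF XV] h(3) tail(1) by (intro distortion_rm_eq_shift) auto
  also have "\<dots> \<le> \<mu> + ((s + a * k) / (4 * lam) + lam * (\<sigma>\<^sup>2 / 2))"
    using tail(2) VS_upper_semivariance(2)[OF XV] by simp
  also have "(s + a * k) / (4 * lam) + lam * (\<sigma>\<^sup>2 / 2) = \<sigma> * r"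
    using r_pos \<open>0 < \<sigma>\<close> unfolding sum_eq lam_def by (simp add: field_simps power2_eq_square)
  finally show ?thesis by (simp add: r_def)
qed

end

section \<open>Symmetric five-point laws\<close>

definition five_point_law :: "real \<Rightarrow> real \<Rightarrow> real \<Rightarrow> real \<Rightarrow> real \<Rightarrow> real measure" where
  "five_point_law \<mu> b u p q = measure_pmf (pmf_of_list
     [(\<mu> - u, q), (\<mu> - b, p), (\<mu>, 1 - 2 * p - 2 * q), (\<mu> + b, p), (\<mu> + u, q)])"

context
  fixes \<mu> b u p q :: real
  assumes b_pos: "0 < b" and b_less_u: "b < u"
    and p_nonneg: "0 \<le> p" and q_nonneg: "0 \<le> q" and pq_le: "2 * p + 2 * q \<le> 1"
begin

private lemma five_point_list_wf: "pmf_of_list_wf [(\<mu> - u, q), (\<mu> - b, p), (\<mu>, 1 - 2 * p - 2 * q), (\<mu> + b, p), (\<mu> + u, q)]"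
  using p_nonneg q_nonneg pq_le by (intro pmf_of_list_wfI) auto

lemma prob_space_five_point_law: "prob_space (five_point_law \<mu> b u p q)"
  by (simp add: five_point_law_def prob_space_measure_pmf)

lemma space_five_point_law: "space (five_point_law \<mu> b u p q) = UNIV"
  by (simp add: five_point_law_def)

lemma measure_five_point_law:
  "measure (five_point_law \<mu> b u p q) A =
     (if \<mu> - u \<in> A then q else 0) + (if \<mu> - b \<in> A then p else 0) + (if \<mu> \<in> A then 1 - 2 * p - 2 * q else 0)
     + (if \<mu> + b \<in> A then p else 0) + (if \<mu> + u \<in> A then q else 0)"
  unfolding five_point_law_def measure_pmf_of_list[OF five_point_list_wf] sum_list_map_filter'
  by (simp add: add.assoc)

lemma measure_five_point_law_atoms:
  "measure (five_point_law \<mu> b u p q) {\<omega> \<in> space (five_point_law \<mu> b u p q). \<omega> = \<mu> - u} = q"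
  "measure (five_point_law \<mu> b u p q) {\<omega> \<in> space (five_point_law \<mu> b u p q). \<omega> = \<mu> - b} = p"
  "measure (five_point_law \<mu> b u p q) {\<omega> \<in> space (five_point_law \<mu> b u p q). \<omega> = \<mu>} = 1 - 2 * p - 2 * q"
  "measure (five_point_law \<mu> b u p q) {\<omega> \<in> space (five_point_law \<mu> b u p q). \<omega> = \<mu> + b} = p"
  "measure (five_point_law \<mu> b u p q) {\<omega> \<in> space (five_point_law \<mu> b u p q). \<omega> = \<mu> + u} = q"
  unfolding space_five_point_law measure_five_point_law using b_pos b_less_u by auto

lemma integral_five_point_law:
  "(\<integral>x. f x \<partial>five_point_law \<mu> b u p q)
     = f (\<mu> - u) * q + f (\<mu> - b) * p + f \<mu> * (1 - 2 * p - 2 * q) + f (\<mu> + b) * p + f (\<mu> + u) * q"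
proof -
  let ?P = "pmf_of_list [(\<mu> - u, q), (\<mu> - b, p), (\<mu>, 1 - 2 * p - 2 * q), (\<mu> + b, p), (\<mu> + u, q)]"
  have distinct: "\<mu> - u \<noteq> \<mu> - b" "\<mu> - u \<noteq> \<mu>" "\<mu> - u \<noteq> \<mu> + b" "\<mu> - u \<noteq> \<mu> + u"
    "\<mu> - b \<noteq> \<mu>" "\<mu> - b \<noteq> \<mu> + b" "\<mu> - b \<noteq> \<mu> + u" "\<mu> \<noteq> \<mu> + b" "\<mu> \<noteq> \<mu> + u" "\<mu> + b \<noteq> \<mu> + u"
    using b_pos b_less_u by linarith+
  have pmf_values: "pmf ?P (\<mu> - u) = q" "pmf ?P (\<mu> - b) = p" "pmf ?P \<mu> = 1 - 2 * p - 2 * q"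
    "pmf ?P (\<mu> + b) = p" "pmf ?P (\<mu> + u) = q"
    unfolding pmf_pmf_of_list[OF five_point_list_wf] using distinct distinct[THEN not_sym] by simp_all
  have "(\<integral>x. f x \<partial>?P) = (\<Sum>a\<in>{\<mu> - u, \<mu> - b, \<mu>, \<mu> + b, \<mu> + u}. f a * pmf ?P a)"
    using set_pmf_of_list[OF five_point_list_wf] by (intro integral_measure_pmf_real) auto
  then show ?thesis
    unfolding five_point_law_def using distinct
    by (simp add: pmf_values add.assoc)
qed

lemma five_point_law_in_VS:
  assumes "2 * (p * b\<^sup>2 + q * u\<^sup>2) = \<sigma>\<^sup>2"
  shows "(\<lambda>x. x) \<in> VS (five_point_law \<mu> b u p q) \<mu> \<sigma>"
proof -
  have "integrable (five_point_law \<mu> b u p q) f" for f :: "real \<Rightarrow> real"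
    unfolding five_point_law_def by (intro integrable_measure_pmf_finite finite_set_pmf_of_list[OF five_point_list_wf])
  moreover have "symmetric_rv (five_point_law \<mu> b u p q) (\<lambda>x. x)"
    unfolding symmetric_rv_def
  proof (intro exI[of _ \<mu>] allI)
    fix x
    have "{\<omega>. \<omega> \<le> x} = {..x}" "{\<omega>. 2 * \<mu> - x \<le> \<omega>} = {2 * \<mu> - x..}" by auto
    then show "measure (five_point_law \<mu> b u p q) {\<omega> \<in> space (five_point_law \<mu> b u p q). \<omega> \<le> x}
        = measure (five_point_law \<mu> b u p q) {\<omega> \<in> space (five_point_law \<mu> b u p q). 2 * \<mu> - x \<le> \<omega>}"
      unfolding space_five_point_law measure_five_point_law by auto
  qed
  moreover have "(\<lambda>x. x) \<in> borel_measurable (five_point_law \<mu> b u p q)"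
    by (simp add: five_point_law_def)
  ultimately show ?thesis
    using assms by (simp add: VS_def integral_five_point_law power2_eq_square algebra_simps)
qed

lemma distortion_rm_five_point_law:
  assumes "h 0 = 0" and h_1: "\<And>t. 1/2 \<le> t \<Longrightarrow> h t = 1"
  shows "distortion_rm h (five_point_law \<mu> b u p q) (\<lambda>x. x) = \<mu> + b * h (p + q) + (u - b) * h q"
proof -
  let ?S = "survival (five_point_law \<mu> b u p q) (\<lambda>x. x)"
  have survival_eq: "?S x = measure (five_point_law \<mu> b u p q) {x<..}" for x
    unfolding survival_def space_five_point_law by (simp add: greaterThan_def)
  have "1/2 \<le> ?S x" if "x < \<mu>" for x
    unfolding survival_eq measure_five_point_law
    using that b_pos b_less_u p_nonneg q_nonneg pq_le by auto
  then have left: "h (?S x) = 1" if "x < \<mu>" for x using h_1 that by blast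
  have right: "indicator {\<mu>..} x * h (?S x)
      = h (p + q) * indicator {\<mu>..<\<mu>+b} x + h q * indicator {\<mu>+b..<\<mu>+u} x" for x
    unfolding survival_eq measure_five_point_law using b_pos b_less_u \<open>h 0 = 0\<close>
    by (auto simp: indicator_def)
  have "integrable lborel (\<lambda>x. indicator {\<mu>..} x * h (?S x))"
    unfolding right
    by (intro Bochner_Integration.integrable_add integrable_mult_right integrable_real_indicator
        emeasure_bounded_finite) auto
  then have "distortion_rm h (five_point_law \<mu> b u p q) (\<lambda>x. x)
      = \<mu> + (\<integral>x. h (p + q) * indicator {\<mu>..<\<mu>+b} x + h q * indicator {\<mu>+b..<\<mu>+u} x \<partial>lborel)"
    unfolding right[symmetric] by (intro distortion_rm_eq_shift left)
  also have "\<dots> = \<mu> + b * h (p + q) + (u - b) * h q"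
    using b_pos b_less_u
    by (subst Bochner_Integration.integral_add) (auto intro!: integrable_mult_right integrable_real_indicator)
  finally show ?thesis .
qed

end

section \<open>The GlueVaR distortion\<close>

lemma sqrt_divide_eq_divide_sqrt_mult:
  fixes x c :: real
  assumes "0 < x" "0 < c"
  shows "sqrt (x / c) = x / sqrt (x * c)"
proof -
  have "x / sqrt (x * c) = (sqrt x * sqrt x) / (sqrt x * sqrt c)"
    using assms by (simp add: real_sqrt_mult)
  also have "\<dots> = sqrt x / sqrt c"
    using assms by (intro nonzero_mult_divide_mult_cancel_left) simp
  finally show ?thesis by (simp add: real_sqrt_divide)
qed

locale gluevar =
  fixes \<alpha> \<beta> h1 h2 :: real
  assumes half_le_alpha: "1/2 \<le> \<alpha>" and alpha_less_beta: "\<alpha> < \<beta>" and beta_less_1: "\<beta> < 1"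
    and h1_nonneg: "0 \<le> h1" and h1_le_h2: "h1 \<le> h2" and h2_less_1: "h2 < 1"
begin

abbreviation K :: "real \<Rightarrow> real" where
  "K \<equiv> glue_K h1 h2 \<beta> \<alpha>"

lemma K_eq_1: "1 - \<alpha> \<le> p \<Longrightarrow> K p = 1"
  using alpha_less_beta by (simp add: glue_K_def)

lemma K_0: "K 0 = 0"
  using beta_less_1 by (simp add: glue_K_def)

lemma K_1_minus_beta: "K (1 - \<beta>) = h1"
  using alpha_less_beta by (simp add: glue_K_def)

lemma K_middle: "1 - \<beta> \<le> p \<Longrightarrow> p < 1 - \<alpha> \<Longrightarrow> K p = h1 + (h2 - h1) / (\<beta> - \<alpha>) * (p - (1 - \<beta>))"
  by (simp add: glue_K_def)

lemma K_mono: "mono K"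
proof (rule monoI)
  fix p q :: real
  assume pq: "p \<le> q"
  have pos: "0 < 1 - \<beta>" "0 < \<beta> - \<alpha>" using alpha_less_beta beta_less_1 by auto
  have slope1: "h1 * p / (1 - \<beta>) \<le> h1 * q / (1 - \<beta>)"
    using pq pos h1_nonneg by (simp add: divide_right_mono mult_left_mono)
  have slope2: "(h2 - h1) * (p - (1 - \<beta>)) / (\<beta> - \<alpha>) \<le> (h2 - h1) * (q - (1 - \<beta>)) / (\<beta> - \<alpha>)"
    using pq pos h1_le_h2 by (simp add: divide_right_mono mult_left_mono)
  have left_le_h1: "p < 1 - \<beta> \<Longrightarrow> h1 * p / (1 - \<beta>) \<le> h1"
    using pos h1_nonneg by (simp add: pos_divide_le_eq mult_left_mono)
  have left_le_middle: "h1 * p / (1 - \<beta>) \<le> h1 + (h2 - h1) * (q - (1 - \<beta>)) / (\<beta> - \<alpha>)"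
    if "p < 1 - \<beta>" "\<not> q < 1 - \<beta>"
  proof -
    have "0 \<le> (h2 - h1) * (q - (1 - \<beta>)) / (\<beta> - \<alpha>)" using that(2) pos h1_le_h2 by simp
    then show ?thesis using left_le_h1[OF that(1)] by linarith
  qed
  have middle_le_1: "p < 1 - \<alpha> \<Longrightarrow> h1 + (h2 - h1) * (p - (1 - \<beta>)) / (\<beta> - \<alpha>) \<le> 1"
  proof -
    assume "p < 1 - \<alpha>"
    then have "(h2 - h1) * (p - (1 - \<beta>)) \<le> (h2 - h1) * (\<beta> - \<alpha>)"
      using h1_le_h2 by (intro mult_left_mono) auto
    then have "(h2 - h1) * (p - (1 - \<beta>)) / (\<beta> - \<alpha>) \<le> h2 - h1"
      using pos(2) by (simp add: pos_divide_le_eq)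
    then show ?thesis using h2_less_1 by linarith
  qed
  show "K p \<le> K q"
    unfolding glue_K_def using pq slope1 slope2 left_le_h1 left_le_middle middle_le_1 h1_le_h2 h2_less_1
    by auto
qed

lemma K_distortion: "mono K" "K 0 = 0" "1/2 \<le> p \<Longrightarrow> K p = 1"
  using K_mono K_0 K_eq_1 half_le_alpha by auto

lemma K_le_linear:
  assumes case1: "h1 / (1 - \<beta>) \<le> (h2 - h1) / (\<beta> - \<alpha>) \<or> (\<beta> - \<alpha>) / (1 - \<alpha>) \<le> 1 - h1"
    and "0 \<le> p"
  shows "K p \<le> p / (1 - \<alpha>)"
proof -
  have pos: "0 < 1 - \<alpha>" "0 < \<beta> - \<alpha>" "0 < 1 - \<beta>" using alpha_less_beta beta_less_1 by auto
  have h1_le: "h1 \<le> (1 - \<beta>) / (1 - \<alpha>)"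
    using case1
  proof
    assume "h1 / (1 - \<beta>) \<le> (h2 - h1) / (\<beta> - \<alpha>)"
    then have "h1 * (\<beta> - \<alpha>) \<le> (h2 - h1) * (1 - \<beta>)" using pos by (simp add: field_simps)
    also have "\<dots> \<le> (1 - h1) * (1 - \<beta>)" using h2_less_1 pos by (intro mult_right_mono) auto
    finally have "h1 * (1 - \<alpha>) \<le> 1 - \<beta>" by (simp add: algebra_simps)
    then show ?thesis using pos by (simp add: field_simps)
  next
    assume "(\<beta> - \<alpha>) / (1 - \<alpha>) \<le> 1 - h1"
    moreover have "(1 - \<beta>) / (1 - \<alpha>) = 1 - (\<beta> - \<alpha>) / (1 - \<alpha>)" using pos by (simp add: field_simps)
    ultimately show ?thesis by simp
  qed
  consider "p < 1 - \<beta>" | "1 - \<beta> \<le> p" "p < 1 - \<alpha>" | "1 - \<alpha> \<le> p" by linarith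
  then show ?thesis
  proof cases
    case 1
    then have "K p = h1 * p / (1 - \<beta>)" by (simp add: glue_K_def)
    also have "\<dots> \<le> (1 - \<beta>) / (1 - \<alpha>) * p / (1 - \<beta>)"
      using h1_le \<open>0 \<le> p\<close> pos by (intro divide_right_mono mult_right_mono) auto
    also have "\<dots> = p / (1 - \<alpha>)" using pos by simp
    finally show ?thesis .
  next
    case 2
    text \<open>Between \<open>1 - \<beta>\<close> and \<open>1 - \<alpha>\<close>, \<open>K\<close> is the convex combination
      \<open>(1 - t) h1 + t h2\<close> of its endpoint values, both below the line.\<close>
    define t where "t = (p - (1 - \<beta>)) / (\<beta> - \<alpha>)"
    have t01: "0 \<le> t" "t \<le> 1" using 2 pos by (auto simp: t_def field_simps)
    have p_eq: "p = (1 - \<beta>) + t * (\<beta> - \<alpha>)" using pos by (simp add: t_def)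
    have "(h2 - h1) / (\<beta> - \<alpha>) * (p - (1 - \<beta>)) = (h2 - h1) * t" by (simp add: t_def)
    then have "K p = h1 * (1 - t) + h2 * t"
      using K_middle[OF 2] by (simp add: algebra_simps)
    also have "\<dots> \<le> (1 - \<beta>) / (1 - \<alpha>) * (1 - t) + 1 * t"
      using h1_le t01 h2_less_1 by (intro add_mono mult_right_mono) auto
    also have "\<dots> = p / (1 - \<alpha>)" using pos unfolding p_eq by (simp add: field_simps)
    finally show ?thesis .
  next
    case 3
    then show ?thesis using K_eq_1 pos by (simp add: field_simps)
  qed
qed

lemma K_le_chord:
  assumes case2: "1 - \<beta> \<le> h1 * (1 - \<alpha>)"
  shows "K t \<le> 1 - (1 - h1) / (\<beta> - \<alpha>) * (1 - \<alpha>) + (1 - h1) / (\<beta> - \<alpha>) * t"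
proof -
  have pos: "0 < 1 - \<alpha>" "0 < \<beta> - \<alpha>" "0 < 1 - \<beta>" using alpha_less_beta beta_less_1 by auto
  define s where "s = (1 - h1) / (\<beta> - \<alpha>)"
  have s_nonneg: "0 \<le> s" unfolding s_def using h1_le_h2 h2_less_1 pos by simp
  have "s * (\<beta> - \<alpha>) = 1 - h1" using pos by (simp add: s_def)
  moreover have "1 - s * (1 - \<alpha>) + s * t - (h1 + s * (t - (1 - \<beta>))) = 1 - h1 - s * (\<beta> - \<alpha>)"
    by (simp add: algebra_simps)
  ultimately have chord_eq: "1 - s * (1 - \<alpha>) + s * t = h1 + s * (t - (1 - \<beta>))"
    by linarith
  consider "t < 1 - \<beta>" | "1 - \<beta> \<le> t" "t < 1 - \<alpha>" | "1 - \<alpha> \<le> t" by linarith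
  then have "K t \<le> 1 - s * (1 - \<alpha>) + s * t"
  proof cases
    case 1
    have "s \<le> h1 / (1 - \<beta>)"
      using case2 pos by (simp add: s_def field_simps)
    then have "0 \<le> (h1 / (1 - \<beta>) - s) * ((1 - \<beta>) - t)" using 1 by simp
    then have "h1 * t / (1 - \<beta>) \<le> h1 + s * (t - (1 - \<beta>))"
      using pos by (simp add: field_simps)
    then show ?thesis using 1 chord_eq by (simp add: glue_K_def)
  next
    case 2
    have "(h2 - h1) / (\<beta> - \<alpha>) \<le> s"
      unfolding s_def using h2_less_1 pos by (intro divide_right_mono) auto
    then have "(h2 - h1) / (\<beta> - \<alpha>) * (t - (1 - \<beta>)) \<le> s * (t - (1 - \<beta>))"
      using 2 by (intro mult_right_mono) auto
    then show ?thesis using K_middle[OF 2] chord_eq by simp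
  next
    case 3
    then show ?thesis using K_eq_1 s_nonneg by (simp add: mult_left_mono)
  qed
  then show ?thesis by (simp add: s_def)
qed

lemma K_le_slope:
  assumes k1_le_k2: "(h2 - h1) / (\<beta> - \<alpha>) \<le> h1 / (1 - \<beta>)"
    and case2: "1 - \<beta> \<le> h1 * (1 - \<alpha>)" and "0 \<le> t"
  shows "K t \<le> h1 / (1 - \<beta>) * t"
proof -
  have pos: "0 < 1 - \<alpha>" "0 < \<beta> - \<alpha>" "0 < 1 - \<beta>" using alpha_less_beta beta_less_1 by auto
  define k where "k = h1 / (1 - \<beta>)"
  have h1_eq: "h1 = k * (1 - \<beta>)" using pos by (simp add: k_def)
  consider "t < 1 - \<beta>" | "1 - \<beta> \<le> t" "t < 1 - \<alpha>" | "1 - \<alpha> \<le> t" by linarith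
  then have "K t \<le> k * t"
  proof cases
    case 1
    then show ?thesis by (simp add: glue_K_def k_def)
  next
    case 2
    have "(h2 - h1) / (\<beta> - \<alpha>) * (t - (1 - \<beta>)) \<le> k * (t - (1 - \<beta>))"
      using k1_le_k2 2 unfolding k_def by (intro mult_right_mono) auto
    moreover have "h1 + k * (t - (1 - \<beta>)) = k * t" using h1_eq by (simp add: algebra_simps)
    ultimately show ?thesis using K_middle[OF 2] by linarith
  next
    case 3
    have "1 \<le> k * (1 - \<alpha>)" using case2 pos by (simp add: k_def field_simps)
    also have "\<dots> \<le> k * t" using 3 pos h1_nonneg by (intro mult_left_mono) (auto simp: k_def)
    finally show ?thesis using K_eq_1[OF 3] by simp
  qed
  then show ?thesis by (simp add: k_def)
qed

lemma distortion_rm_le_case1: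
  assumes "prob_space M" and XV: "X \<in> VS M \<mu> \<sigma>" and "0 < \<sigma>"
    and case1: "h1 / (1 - \<beta>) \<le> (h2 - h1) / (\<beta> - \<alpha>) \<or> (\<beta> - \<alpha>) / (1 - \<alpha>) \<le> 1 - h1"
  shows "distortion_rm K M X \<le> \<mu> + \<sigma> * sqrt (1 / (2 * (1 - \<alpha>)))"
proof -
  have pos: "0 < 1 - \<alpha>" using alpha_less_beta beta_less_1 by simp
  have "K t \<le> 0 + 1 / (1 - \<alpha>) * t" "K t \<le> 1 / (1 - \<alpha>) * t" if "0 \<le> t" for t
    using K_le_linear[OF case1 that] by simp_all
  then have "distortion_rm K M X \<le> \<mu> + \<sigma> * sqrt ((1 / (1 - \<alpha>) + 0 * (1 / (1 - \<alpha>))) / 2)"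
    using pos
    by (intro prob_space.distortion_rm_le_of_majorants[OF assms(1) K_distortion _ _ _ _ _ _ XV \<open>0 < \<sigma>\<close>]) auto
  moreover have "(1 / (1 - \<alpha>) + 0 * (1 / (1 - \<alpha>))) / 2 = 1 / (2 * (1 - \<alpha>))" by simp
  ultimately show ?thesis by (simp only:)
qed

lemma distortion_rm_le_case2:
  assumes "prob_space M" and XV: "X \<in> VS M \<mu> \<sigma>" and "0 < \<sigma>"
    and k1_le_k2: "(h2 - h1) / (\<beta> - \<alpha>) \<le> h1 / (1 - \<beta>)"
    and case2: "1 - h1 < (\<beta> - \<alpha>) / (1 - \<alpha>)"
  shows "distortion_rm K M X
    \<le> \<mu> + \<sigma> * sqrt ((h1\<^sup>2 * (1 - \<alpha>) + (1 - 2 * h1) * (1 - \<beta>)) / (2 * (1 - \<beta>) * (\<beta> - \<alpha>)))"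
proof -
  have pos: "0 < 1 - \<alpha>" "0 < \<beta> - \<alpha>" "0 < 1 - \<beta>" using alpha_less_beta beta_less_1 by auto
  have chord_above: "1 - \<beta> < h1 * (1 - \<alpha>)"
    using case2 pos by (simp add: field_simps)
  define s where "s = (1 - h1) / (\<beta> - \<alpha>)"
  define k where "k = h1 / (1 - \<beta>)"
  define a where "a = 1 - s * (1 - \<alpha>)"
  have s_pos: "0 < s" using pos h1_le_h2 h2_less_1 by (simp add: s_def)
  have s_le_k: "s \<le> k"
    using chord_above pos by (simp add: s_def k_def field_simps)
  have a_nonneg: "0 \<le> a"
    using chord_above pos by (simp add: a_def s_def field_simps)
  have k_nonneg: "0 \<le> k" using s_pos s_le_k by simp
  have s_times: "s * (\<beta> - \<alpha>) = 1 - h1" and k_times: "k * (1 - \<beta>) = h1"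
    using pos by (simp_all add: s_def k_def)
  have "a - (h1 - s * (1 - \<beta>)) = (1 - h1) - s * (\<beta> - \<alpha>)" by (simp add: a_def algebra_simps)
  then have a_eq: "a = h1 - s * (1 - \<beta>)" using s_times by simp
  have "a * k = h1 * k - s * (k * (1 - \<beta>))" by (simp add: a_eq algebra_simps)
  then have "s + a * k = s * (1 - h1) + h1 * k" unfolding k_times by (simp add: algebra_simps)
  also have "\<dots> = (1 - h1)\<^sup>2 / (\<beta> - \<alpha>) + h1\<^sup>2 / (1 - \<beta>)"
    by (simp add: s_def k_def power2_eq_square)
  also have "\<dots> = ((1 - h1)\<^sup>2 * (1 - \<beta>) + h1\<^sup>2 * (\<beta> - \<alpha>)) / ((1 - \<beta>) * (\<beta> - \<alpha>))"
    using pos by (simp add: field_simps)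
  also have "(1 - h1)\<^sup>2 * (1 - \<beta>) + h1\<^sup>2 * (\<beta> - \<alpha>) = h1\<^sup>2 * (1 - \<alpha>) + (1 - 2 * h1) * (1 - \<beta>)"
    by (simp add: power2_eq_square algebra_simps)
  finally have sum_eq: "(s + a * k) / 2
      = (h1\<^sup>2 * (1 - \<alpha>) + (1 - 2 * h1) * (1 - \<beta>)) / (2 * (1 - \<beta>) * (\<beta> - \<alpha>))"
    by (simp add: mult.assoc) (simp add: algebra_simps)
  have "distortion_rm K M X \<le> \<mu> + \<sigma> * sqrt ((s + a * k) / 2)"
  proof (rule prob_space.distortion_rm_le_of_majorants[OF assms(1) K_distortion _ _ s_le_k _ _ _ XV \<open>0 < \<sigma>\<close>])
    show "0 < s + a * k" using s_pos a_nonneg k_nonneg by (simp add: add_pos_nonneg)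
    show "K t \<le> a + s * t" for t
      using K_le_chord[of t] chord_above by (simp add: a_def s_def)
    show "K t \<le> k * t" if "0 \<le> t" for t
      using K_le_slope[OF k1_le_k2 _ that] chord_above by (simp add: k_def)
  qed (use a_nonneg s_pos in auto)
  then show ?thesis by (simp only: sum_eq)
qed

lemma extremal_law_case1:
  assumes "0 < \<sigma>"
  shows "\<exists>(M::real measure) X. prob_space M \<and> X \<in> VS M \<mu> \<sigma>
    \<and> measure M {\<omega> \<in> space M. X \<omega> = \<mu> - \<sigma> / sqrt (2 * (1 - \<alpha>))} = 1 - \<alpha>
    \<and> measure M {\<omega> \<in> space M. X \<omega> = \<mu> + \<sigma> / sqrt (2 * (1 - \<alpha>))} = 1 - \<alpha>
    \<and> measure M {\<omega> \<in> space M. X \<omega> = \<mu>} = 2 * \<alpha> - 1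
    \<and> distortion_rm K M X = \<mu> + \<sigma> * sqrt (1 / (2 * (1 - \<alpha>)))"
proof -
  have pos: "0 < 1 - \<alpha>" using alpha_less_beta beta_less_1 by simp
  define b where "b = \<sigma> / sqrt (2 * (1 - \<alpha>))"
  have "0 < b" using pos \<open>0 < \<sigma>\<close> by (simp add: b_def)
  then have law: "0 < b" "b < 2 * b" "0 \<le> 1 - \<alpha>" "0 \<le> (0::real)" "2 * (1 - \<alpha>) + 2 * 0 \<le> 1"
    using pos half_le_alpha by simp_all
  have "b\<^sup>2 = \<sigma>\<^sup>2 / (2 * (1 - \<alpha>))" using pos by (simp add: b_def power_divide)
  then have var: "2 * ((1 - \<alpha>) * b\<^sup>2 + 0 * (2 * b)\<^sup>2) = \<sigma>\<^sup>2"
    using pos by (simp add: field_simps)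
  have "distortion_rm K (five_point_law \<mu> b (2 * b) (1 - \<alpha>) 0) (\<lambda>x. x)
      = \<mu> + b * K (1 - \<alpha> + 0) + (2 * b - b) * K 0"
    by (rule distortion_rm_five_point_law[where h=K, OF law K_0 K_distortion(3)])
  also have "\<dots> = \<mu> + \<sigma> * sqrt (1 / (2 * (1 - \<alpha>)))"
    by (simp add: K_eq_1 K_0 b_def real_sqrt_divide)
  finally show ?thesis
    using prob_space_five_point_law[OF law] five_point_law_in_VS[OF law var]
      measure_five_point_law_atoms(2-4)[OF law]
    by (intro exI[of _ "five_point_law \<mu> b (2 * b) (1 - \<alpha>) 0"] exI[of _ "\<lambda>x. x"]) (simp add: b_def)
qed

lemma extremal_law_case2:
  assumes "0 < \<sigma>" and case2: "1 - h1 < (\<beta> - \<alpha>) / (1 - \<alpha>)"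
  defines "\<zeta> \<equiv> h1\<^sup>2 * (1 - \<alpha>) + (1 - 2 * h1) * (1 - \<beta>)"
  shows "\<exists>(M::real measure) X. prob_space M \<and> X \<in> VS M \<mu> \<sigma>
    \<and> measure M {\<omega> \<in> space M. X \<omega> = \<mu> - \<sigma> * h1 * sqrt ((\<beta> - \<alpha>) / (2 * (1 - \<beta>) * \<zeta>))} = 1 - \<beta>
    \<and> measure M {\<omega> \<in> space M. X \<omega> = \<mu> + \<sigma> * h1 * sqrt ((\<beta> - \<alpha>) / (2 * (1 - \<beta>) * \<zeta>))} = 1 - \<beta>
    \<and> measure M {\<omega> \<in> space M. X \<omega> = \<mu> - \<sigma> * (1 - h1) * sqrt ((1 - \<beta>) / (2 * (\<beta> - \<alpha>) * \<zeta>))} = \<beta> - \<alpha>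
    \<and> measure M {\<omega> \<in> space M. X \<omega> = \<mu> + \<sigma> * (1 - h1) * sqrt ((1 - \<beta>) / (2 * (\<beta> - \<alpha>) * \<zeta>))} = \<beta> - \<alpha>
    \<and> measure M {\<omega> \<in> space M. X \<omega> = \<mu>} = 2 * \<alpha> - 1
    \<and> distortion_rm K M X = \<mu> + \<sigma> * sqrt (\<zeta> / (2 * (1 - \<beta>) * (\<beta> - \<alpha>)))"
proof -
  have pos: "0 < 1 - \<alpha>" "0 < \<beta> - \<alpha>" "0 < 1 - \<beta>" using alpha_less_beta beta_less_1 by auto
  have chord_above: "(1 - h1) * (1 - \<beta>) < h1 * (\<beta> - \<alpha>)"
    using case2 pos by (simp add: field_simps)
  have h1_less_1: "h1 < 1" using h1_le_h2 h2_less_1 by simp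
  have \<zeta>_eq: "\<zeta> = (1 - h1)\<^sup>2 * (1 - \<beta>) + h1\<^sup>2 * (\<beta> - \<alpha>)"
    by (simp add: \<zeta>_def power2_eq_square algebra_simps)
  have \<zeta>_pos: "0 < \<zeta>"
    unfolding \<zeta>_eq using h1_less_1 pos by (intro add_pos_nonneg) simp_all
  text \<open>All atoms and the risk are rational multiples of \<open>Q = \<sigma> / sqrt D\<close>.\<close>
  define D where "D = 2 * (1 - \<beta>) * (\<beta> - \<alpha>) * \<zeta>"
  define Q where "Q = \<sigma> / sqrt D"
  have D_pos: "0 < D" and Q_pos: "0 < Q" using pos \<zeta>_pos \<open>0 < \<sigma>\<close> by (simp_all add: D_def Q_def)
  have D_factors: "D = (1 - \<beta>) * (2 * (\<beta> - \<alpha>) * \<zeta>)" "D = (\<beta> - \<alpha>) * (2 * (1 - \<beta>) * \<zeta>)"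
    "D = \<zeta> * (2 * (1 - \<beta>) * (\<beta> - \<alpha>))"
    by (simp_all only: D_def mult_ac)
  have sqrt_atom_b: "sqrt ((1 - \<beta>) / (2 * (\<beta> - \<alpha>) * \<zeta>)) = (1 - \<beta>) / sqrt D"
    unfolding D_factors(1) using pos \<zeta>_pos by (intro sqrt_divide_eq_divide_sqrt_mult) simp_all
  have sqrt_atom_u: "sqrt ((\<beta> - \<alpha>) / (2 * (1 - \<beta>) * \<zeta>)) = (\<beta> - \<alpha>) / sqrt D"
    unfolding D_factors(2) using pos \<zeta>_pos by (intro sqrt_divide_eq_divide_sqrt_mult) simp_all
  have sqrt_risk: "sqrt (\<zeta> / (2 * (1 - \<beta>) * (\<beta> - \<alpha>))) = \<zeta> / sqrt D"
    unfolding D_factors(3) using pos \<zeta>_pos by (intro sqrt_divide_eq_divide_sqrt_mult) simp_all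
  define b where "b = \<sigma> * (1 - h1) * sqrt ((1 - \<beta>) / (2 * (\<beta> - \<alpha>) * \<zeta>))"
  define u where "u = \<sigma> * h1 * sqrt ((\<beta> - \<alpha>) / (2 * (1 - \<beta>) * \<zeta>))"
  have b_eq: "b = Q * ((1 - h1) * (1 - \<beta>))" and u_eq: "u = Q * (h1 * (\<beta> - \<alpha>))"
    unfolding b_def u_def sqrt_atom_b sqrt_atom_u Q_def by simp_all
  have law: "0 < b" "b < u" "0 \<le> \<beta> - \<alpha>" "0 \<le> 1 - \<beta>" "2 * (\<beta> - \<alpha>) + 2 * (1 - \<beta>) \<le> 1"
    using Q_pos h1_less_1 pos chord_above half_le_alpha by (simp_all add: b_eq u_eq)
  have "2 * ((\<beta> - \<alpha>) * b\<^sup>2 + (1 - \<beta>) * u\<^sup>2) = Q\<^sup>2 * D"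
    by (simp add: b_eq u_eq D_def \<zeta>_eq power2_eq_square algebra_simps)
  then have var: "2 * ((\<beta> - \<alpha>) * b\<^sup>2 + (1 - \<beta>) * u\<^sup>2) = \<sigma>\<^sup>2"
    using D_pos by (simp add: Q_def power_divide)
  have "distortion_rm K (five_point_law \<mu> b u (\<beta> - \<alpha>) (1 - \<beta>)) (\<lambda>x. x)
      = \<mu> + b * K (\<beta> - \<alpha> + (1 - \<beta>)) + (u - b) * K (1 - \<beta>)"
    by (rule distortion_rm_five_point_law[where h=K, OF law K_0 K_distortion(3)])
  also have "\<dots> = \<mu> + Q * \<zeta>"
    by (simp add: K_eq_1 K_1_minus_beta b_eq u_eq \<zeta>_eq power2_eq_square algebra_simps)
  also have "\<dots> = \<mu> + \<sigma> * sqrt (\<zeta> / (2 * (1 - \<beta>) * (\<beta> - \<alpha>)))"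
    unfolding sqrt_risk Q_def by simp
  finally show ?thesis
    using prob_space_five_point_law[OF law] five_point_law_in_VS[OF law var]
      measure_five_point_law_atoms[OF law]
    by (intro exI[of _ "five_point_law \<mu> b u (\<beta> - \<alpha>) (1 - \<beta>)"] exI[of _ "\<lambda>x. x"])
      (simp add: b_def u_def)
qed

end

theorem proposition3p2:
  fixes \<mu> \<sigma> \<alpha> \<beta> h1 h2 :: real
  assumes "\<sigma> > 0" and "1/2 \<le> \<alpha>" and "\<alpha> < \<beta>" and "\<beta> < 1"
    and "0 \<le> h1" and "h1 \<le> h2" and "h2 < 1"
  defines "k1 \<equiv> (h2 - h1) / (\<beta> - \<alpha>)" and "k2 \<equiv> h1 / (1 - \<beta>)"
    and "\<zeta> \<equiv> h1\<^sup>2 * (1 - \<alpha>) + (1 - 2 * h1) * (1 - \<beta>)"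
  shows
    "((k1 \<ge> k2 \<or> (k1 < k2 \<and> 1 - h1 \<ge> (\<beta> - \<alpha>) / (1 - \<alpha>))) \<longrightarrow>
       (\<forall>(M::'a measure) X. prob_space M \<longrightarrow> X \<in> VS M \<mu> \<sigma> \<longrightarrow>
          distortion_rm (glue_K h1 h2 \<beta> \<alpha>) M X \<le> \<mu> + \<sigma> * sqrt (1 / (2 * (1 - \<alpha>))))
     \<and> (\<exists>(M::real measure) X. prob_space M \<and> X \<in> VS M \<mu> \<sigma>
          \<and> measure M {\<omega> \<in> space M. X \<omega> = \<mu> - \<sigma> / sqrt (2 * (1 - \<alpha>))} = 1 - \<alpha>
          \<and> measure M {\<omega> \<in> space M. X \<omega> = \<mu> + \<sigma> / sqrt (2 * (1 - \<alpha>))} = 1 - \<alpha>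
          \<and> measure M {\<omega> \<in> space M. X \<omega> = \<mu>} = 2 * \<alpha> - 1
          \<and> distortion_rm (glue_K h1 h2 \<beta> \<alpha>) M X = \<mu> + \<sigma> * sqrt (1 / (2 * (1 - \<alpha>)))))
   \<and> ((k1 < k2 \<and> 1 - h1 < (\<beta> - \<alpha>) / (1 - \<alpha>)) \<longrightarrow>
       (\<forall>(M::'a measure) X. prob_space M \<longrightarrow> X \<in> VS M \<mu> \<sigma> \<longrightarrow>
          distortion_rm (glue_K h1 h2 \<beta> \<alpha>) M X
            \<le> \<mu> + \<sigma> * sqrt (\<zeta> / (2 * (1 - \<beta>) * (\<beta> - \<alpha>))))
     \<and> (\<exists>(M::real measure) X. prob_space M \<and> X \<in> VS M \<mu> \<sigma>
          \<and> measure M {\<omega> \<in> space M. X \<omega> = \<mu> - \<sigma> * h1 * sqrt ((\<beta> - \<alpha>) / (2 * (1 - \<beta>) * \<zeta>))} = 1 - \<beta>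
          \<and> measure M {\<omega> \<in> space M. X \<omega> = \<mu> + \<sigma> * h1 * sqrt ((\<beta> - \<alpha>) / (2 * (1 - \<beta>) * \<zeta>))} = 1 - \<beta>
          \<and> measure M {\<omega> \<in> space M. X \<omega> = \<mu> - \<sigma> * (1 - h1) * sqrt ((1 - \<beta>) / (2 * (\<beta> - \<alpha>) * \<zeta>))} = \<beta> - \<alpha>
          \<and> measure M {\<omega> \<in> space M. X \<omega> = \<mu> + \<sigma> * (1 - h1) * sqrt ((1 - \<beta>) / (2 * (\<beta> - \<alpha>) * \<zeta>))} = \<beta> - \<alpha>
          \<and> measure M {\<omega> \<in> space M. X \<omega> = \<mu>} = 2 * \<alpha> - 1
          \<and> distortion_rm (glue_K h1 h2 \<beta> \<alpha>) M X
              = \<mu> + \<sigma> * sqrt (\<zeta> / (2 * (1 - \<beta>) * (\<beta> - \<alpha>)))))"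
proof -
  interpret gluevar \<alpha> \<beta> h1 h2 using assms(2-7) by unfold_locales
  have case1: "h1 / (1 - \<beta>) \<le> (h2 - h1) / (\<beta> - \<alpha>) \<or> (\<beta> - \<alpha>) / (1 - \<alpha>) \<le> 1 - h1"
    if "k2 \<le> k1 \<or> k1 < k2 \<and> (\<beta> - \<alpha>) / (1 - \<alpha>) \<le> 1 - h1"
    using that by (auto simp: k1_def k2_def)
  have k1_le_k2: "(h2 - h1) / (\<beta> - \<alpha>) \<le> h1 / (1 - \<beta>)" if "k1 < k2"
    using that by (simp add: k1_def k2_def)
  show ?thesis
    using distortion_rm_le_case1[OF _ _ \<open>\<sigma> > 0\<close> case1]
      distortion_rm_le_case2[OF _ _ \<open>\<sigma> > 0\<close> k1_le_k2]
      extremal_law_case1[OF \<open>\<sigma> > 0\<close>] extremal_law_case2[OF \<open>\<sigma> > 0\<close>]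
    unfolding \<zeta>_def by blast
qed

end
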